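(* Let $(\bar M,\bar\varphi,\bar\xi_\alpha,\bar\eta^\alpha,\bar g)$ be an indefinite $\mathcal S$-manifold and $(M,g,S(TM))$ a characteristic lightlike hypersurface of $\bar M$, with $E,N$ defined on a coordinate neighbourhood $\mathcal U$. Then for all $X,Y\in\Gamma(D_0|_{\mathcal U})$: $\bar g((\bar\nabla_X\bar\varphi)Y,E)=0$ and $\bar g((\bar\nabla_X\bar\varphi)Y,N)=0$.
   Context: Indefinite $g.f.f$-manifold $(\bar M,\bar\varphi,\bar\xi_\alpha,\bar\eta^\alpha,\bar g)$, $\alpha=1,\dots,r$, $\dim\bar M=2n+r$: $\bar\varphi$ a non-null $(1,1)$-tensor of constant rank, $\bar\varphi^2=-I+\sum_\alpha\bar\eta^\alpha\otimes\bar\xi_\alpha$, $\bar\eta^\alpha(\bar\xi_\beta)=\delta^\alpha_\beta$, $\bar g$ semi-Riemannian of index $\nu$, $0<\nu<2n+r$, with $\bar g(\bar\varphi X,\bar\varphi Y)=\bar g(X,Y)-\sum_\alpha\varepsilon_\alpha\bar\eta^\alpha(X)\bar\eta^\alpha(Y)$, $\varepsilon_\alpha=\bar g(\bar\xi_\alpha,\bar\xi_\alpha)=\pm1$. Indefinite $\mathcal S$-manifold: additionally $N_{\bar\varphi}+2\sum_\alpha d\bar\eta^\alpha\otimes\bar\xi_\alpha=0$ and $d\bar\eta^\alpha=\Phi$ for all $\alpha$, $\Phi(X,Y)=\bar g(X,\bar\varphi Y)$; $\bar\nabla$ denotes its Levi-Civita connection. Lightlike hypersurface $M$: induced metric $g$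 degenerate, $Rad(TM)=TM\cap TM^\perp$ of rank one, screen $S(TM)$ with $TM=Rad(TM)\perp S(TM)$; $ltr(M)$ the lightlike transversal bundle with local sections $E$ of $Rad(TM)$, $N$ of $ltr(M)$ satisfying $\bar g(N,E)=1$, $\bar g(N,N)=0$, $N\perp S(TM)$. $(M,g,S(TM))$ is characteristic if all $\bar\xi_\alpha$ are tangent to $M$, $\ker\bar\varphi\subset S(TM)$ and $\bar\varphi E\in\Gamma(S(TM))$ (then $\bar\varphi N\in\Gamma(S(TM))$). $D_0$ is the orthogonal complement in $S(TM)$ of the non-degenerate rank-2 bundle $\bar\varphi(Rad(TM))\oplus\bar\varphi(ltr(M))$; $D_0$ is $\bar\varphi$-invariant and contains all $\bar\xi_\alpha$. *)

theory Defs
  imports "HOL-Analysis.Analysis"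
begin

text \<open>Local (coordinate) model. The ambient manifold is modelled on an open set
  U of real^'m (a chart); tensor fields are given by their coordinate expressions.\<close>

fun smoothk :: "nat \<Rightarrow> (real^'m) set \<Rightarrow> (real^'m \<Rightarrow> 'b::euclidean_space) \<Rightarrow> bool" where
  "smoothk 0 U f = continuous_on U f"
| "smoothk (Suc k) U f = (f differentiable_on U \<and>
      (\<forall>i::'m. smoothk k U (\<lambda>x. frechet_derivative f (at x) (axis i 1))))"

definition smooth_on :: "(real^'m) set \<Rightarrow> (real^'m \<Rightarrow> 'b::euclidean_space) \<Rightarrow> bool" where
  "smooth_on U f = (\<forall>k. smoothk k U f)"

definition gb :: "(real^'m \<Rightarrow> real^'m^'m) \<Rightarrow> real^'m \<Rightarrow> real^'m \<Rightarrow> real^'m \<Rightarrow> real" where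
  "gb G x u v = u \<bullet> (G x *v v)"

definition metric_index :: "(real^'m \<Rightarrow> real^'m^'m) \<Rightarrow> real^'m \<Rightarrow> nat" where
  "metric_index G x = Max {dim V | V. subspace V \<and> (\<forall>v\<in>V. v \<noteq> 0 \<longrightarrow> gb G x v v < 0)}"

definition lie :: "(real^'m \<Rightarrow> real^'m) \<Rightarrow> (real^'m \<Rightarrow> real^'m) \<Rightarrow> real^'m \<Rightarrow> real^'m" where
  "lie X Y x = frechet_derivative Y (at x) (X x) - frechet_derivative X (at x) (Y x)"

definition phiF :: "(real^'m \<Rightarrow> real^'m^'m) \<Rightarrow> (real^'m \<Rightarrow> real^'m) \<Rightarrow> real^'m \<Rightarrow> real^'m" where
  "phiF Phi X = (\<lambda>y. Phi y *v X y)"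

definition nijenhuis :: "(real^'m \<Rightarrow> real^'m^'m) \<Rightarrow> (real^'m \<Rightarrow> real^'m) \<Rightarrow> (real^'m \<Rightarrow> real^'m) \<Rightarrow> real^'m \<Rightarrow> real^'m" where
  "nijenhuis Phi X Y x =
     Phi x *v (Phi x *v lie X Y x) + lie (phiF Phi X) (phiF Phi Y) x
     - Phi x *v lie (phiF Phi X) Y x - Phi x *v lie X (phiF Phi Y) x"

text \<open>Exterior derivative of a 1-form (Blair's convention, with factor 1/2):
  d eta(X,Y) = 1/2 (X(eta Y) - Y(eta X) - eta([X,Y])).  The 1-form is given by
  the vector field eta with eta(v) = eta x \<bullet> v.\<close>
definition d_form :: "(real^'m \<Rightarrow> real^'m) \<Rightarrow> (real^'m \<Rightarrow> real^'m) \<Rightarrow> (real^'m \<Rightarrow> real^'m) \<Rightarrow> real^'m \<Rightarrow> real" where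
  "d_form eta X Y x = (1/2) * (frechet_derivative (\<lambda>y. eta y \<bullet> Y y) (at x) (X x)
       - frechet_derivative (\<lambda>y. eta y \<bullet> X y) (at x) (Y x) - eta x \<bullet> lie X Y x)"

text \<open>Christoffel symbols of the Levi-Civita connection of G:
  Gamma(u,w) is the vector with g(Gamma(u,w), e_l) =
  1/2 ((D_u g)(w,e_l) + (D_w g)(u,e_l) - (D_{e_l} g)(u,w)).\<close>
definition christoffel :: "(real^'m \<Rightarrow> real^'m^'m) \<Rightarrow> real^'m \<Rightarrow> real^'m \<Rightarrow> real^'m \<Rightarrow> real^'m" where
  "christoffel G x u w = (1/2) *\<^sub>R (matrix_inv (G x) *v
     (\<chi> l. w \<bullet> (frechet_derivative G (at x) u *v axis l 1)
          + u \<bullet> (frechet_derivative G (at x) w *v axis l 1)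
          - u \<bullet> (frechet_derivative G (at x) (axis l 1) *v w)))"

text \<open>(nabla_u phi) w at x, for the Levi-Civita connection nabla of G.\<close>
definition nabla_phi :: "(real^'m \<Rightarrow> real^'m^'m) \<Rightarrow> (real^'m \<Rightarrow> real^'m^'m) \<Rightarrow> real^'m \<Rightarrow> real^'m \<Rightarrow> real^'m \<Rightarrow> real^'m" where
  "nabla_phi G Phi x u w = frechet_derivative Phi (at x) u *v w
     + christoffel G x u (Phi x *v w) - Phi x *v christoffel G x u w"

definition indef_S_manifold ::
  "(real^'m) set \<Rightarrow> nat \<Rightarrow> (real^'m \<Rightarrow> real^'m^'m) \<Rightarrow> ('r::finite \<Rightarrow> real^'m \<Rightarrow> real^'m)
   \<Rightarrow> ('r \<Rightarrow> real^'m \<Rightarrow> real^'m) \<Rightarrow> (real^'m \<Rightarrow> real^'m^'m) \<Rightarrow> bool" where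
  "indef_S_manifold U n Phi xi eta G \<longleftrightarrow>
     open U \<and> n > 0 \<and> CARD('m) = 2 * n + CARD('r) \<and>
     smooth_on U Phi \<and> smooth_on U G \<and> (\<forall>a. smooth_on U (xi a) \<and> smooth_on U (eta a)) \<and>
     (\<forall>x\<in>U.
        transpose (G x) = G x \<and> invertible (G x) \<and>
        0 < metric_index G x \<and> metric_index G x < CARD('m) \<and>
        rank (Phi x) = 2 * n \<and>
        (\<forall>v. Phi x *v (Phi x *v v) = - v + (\<Sum>a\<in>UNIV. (eta a x \<bullet> v) *\<^sub>R xi a x)) \<and>
        (\<forall>a b. eta a x \<bullet> xi b x = (if a = b then 1 else 0)) \<and>
        (\<forall>a. gb G x (xi a x) (xi a x) = 1 \<or> gb G x (xi a x) (xi a x) = -1) \<and>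
        (\<forall>u v. gb G x (Phi x *v u) (Phi x *v v) =
            gb G x u v - (\<Sum>a\<in>UNIV. gb G x (xi a x) (xi a x) * (eta a x \<bullet> u) * (eta a x \<bullet> v)))) \<and>
     (\<forall>X Y. smooth_on U X \<longrightarrow> smooth_on U Y \<longrightarrow>
        (\<forall>x\<in>U. nijenhuis Phi X Y x + (\<Sum>a\<in>UNIV. (2 * d_form (eta a) X Y x) *\<^sub>R xi a x) = 0 \<and>
                (\<forall>a. d_form (eta a) X Y x = gb G x (X x) (Phi x *v Y x))))"

definition rad_space :: "(real^'m \<Rightarrow> real^'m^'m) \<Rightarrow> real^'m \<Rightarrow> (real^'m) set \<Rightarrow> (real^'m) set" where
  "rad_space G x T = {v \<in> T. \<forall>w\<in>T. gb G x v w = 0}"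

text \<open>A characteristic lightlike hypersurface M = {x in U. F x = 0} (a local
  description on a coordinate neighbourhood), tangent spaces ker dF, screen
  distribution S, with sections E of Rad(TM) and N of ltr(M).\<close>
definition char_lightlike_hypersurface ::
  "(real^'m) set \<Rightarrow> (real^'m \<Rightarrow> real^'m^'m) \<Rightarrow> ('r \<Rightarrow> real^'m \<Rightarrow> real^'m)
   \<Rightarrow> (real^'m \<Rightarrow> real^'m^'m) \<Rightarrow> (real^'m \<Rightarrow> real) \<Rightarrow> (real^'m \<Rightarrow> (real^'m) set)
   \<Rightarrow> (real^'m \<Rightarrow> real^'m) \<Rightarrow> (real^'m \<Rightarrow> real^'m) \<Rightarrow> bool" where
  "char_lightlike_hypersurface U Phi xi G F S E N \<longleftrightarrow>
     smooth_on U F \<and> smooth_on U E \<and> smooth_on U N \<and>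
     (\<exists>k (W :: nat \<Rightarrow> real^'m \<Rightarrow> real^'m). (\<forall>i<k. smooth_on U (W i)) \<and>
        (\<forall>x\<in>U. F x = 0 \<longrightarrow> S x = span {W i x | i. i < k})) \<and>
     (\<forall>x\<in>U. F x = 0 \<longrightarrow>
        (let T = {v. frechet_derivative F (at x) v = 0} in
          frechet_derivative F (at x) \<noteq> (\<lambda>v. 0) \<and>
          dim (rad_space G x T) = 1 \<and>
          subspace (S x) \<and> S x \<subseteq> T \<and> rad_space G x T \<inter> S x = {0} \<and>
          T = {r + s | r s. r \<in> rad_space G x T \<and> s \<in> S x} \<and>
          E x \<in> rad_space G x T \<and> E x \<noteq> 0 \<and>
          gb G x (N x) (E x) = 1 \<and> gb G x (N x) (N x) = 0 \<and>
          (\<forall>s\<in>S x. gb G x (N x) s = 0) \<and>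
          (\<forall>a. xi a x \<in> T) \<and>
          {v. Phi x *v v = 0} \<subseteq> S x \<and>
          Phi x *v E x \<in> S x))"

definition D0 :: "(real^'m \<Rightarrow> real^'m^'m) \<Rightarrow> (real^'m \<Rightarrow> real^'m^'m) \<Rightarrow> (real^'m \<Rightarrow> (real^'m) set)
   \<Rightarrow> (real^'m \<Rightarrow> real^'m) \<Rightarrow> (real^'m \<Rightarrow> real^'m) \<Rightarrow> real^'m \<Rightarrow> (real^'m) set" where
  "D0 G Phi S E N x = {v \<in> S x. gb G x v (Phi x *v E x) = 0 \<and> gb G x v (Phi x *v N x) = 0}"

end

theory Submission
  imports Defs
begin

text \<open>
  At a point x we write g = G x, phi = Phi x and let B(u,a,b) = g((nabla_u phi) a, b).
  Differentiating the defining identities of the indefinite S-structure at x (skew-symmetry of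
  phi, compatibility of g with phi, phi xi = 0, d eta = Phi, normality, and closedness of the
  fundamental form Phi = d eta, the last one via symmetry of second derivatives) yields a list of
  linear identities for the first derivatives of G, Phi, xi and eta at x.  These are collected in
  the locale phi_derivative_data, where B is expressed by the Koszul formula and an elementary
  but lengthy algebraic argument shows B(X,Y,Z) = 0 whenever Z is g-orthogonal to X, Y and all xi.
\<close>

section \<open>The algebraic core\<close>

locale metric_f_structure =
  fixes gg :: "'v::real_vector \<Rightarrow> 'v \<Rightarrow> real" and p :: "'v \<Rightarrow> 'v"
    and et :: "'r::finite \<Rightarrow> 'v \<Rightarrow> real" and xi :: "'r \<Rightarrow> 'v" and ep :: "'r \<Rightarrow> real"
  assumes gg_linear: "\<And>u. linear (gg u)" and gg_sym: "\<And>u v. gg u v = gg v u"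
    and p_linear: "linear p" and et_linear: "\<And>al. linear (et al)"
    and p_square: "\<And>v. p (p v) = - v + (\<Sum>al\<in>UNIV. et al v *\<^sub>R xi al)"
    and p_xi: "\<And>al. p (xi al) = 0" and et_p: "\<And>al v. et al (p v) = 0"
    and et_xi: "\<And>al b. et al (xi b) = (if al = b then 1 else 0)"
    and gg_p_skew: "\<And>a b. gg (p a) b = - gg a (p b)"
    and ep_square: "\<And>al. ep al * ep al = 1"
begin

lemma gg_linear_left: "linear (\<lambda>a. gg a b)"
proof -
  have "(\<lambda>a. gg a b) = gg b" by (rule ext) (rule gg_sym)
  then show ?thesis using gg_linear[of b] by simp
qed

lemma gg_xi_p: "gg (xi al) (p v) = 0"
  using gg_p_skew[of "xi al" v] p_xi linear_0[OF gg_linear_left] by simp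

lemma p_square_horizontal: "(\<And>al. et al v = 0) \<Longrightarrow> p (p v) = - v"
  using p_square[of v] by simp

end

definition koszul :: "('v \<Rightarrow> 'v \<Rightarrow> 'v \<Rightarrow> real) \<Rightarrow> 'v \<Rightarrow> 'v \<Rightarrow> 'v \<Rightarrow> real" where
  "koszul q u w z = (q u w z + q w u z - q z u w) / 2"

text \<open>If q u a b is the derivative D_u g (a,b) of the metric, koszul q u w z = g(Gamma(u,w),z)
  is the Koszul formula for the Christoffel symbols.  With Pm u a = (D_u phi) a,
  nabla_form gives g((nabla_u phi) a, b) (using the skew-symmetry of phi).\<close>
definition nabla_form :: "('v \<Rightarrow> 'v \<Rightarrow> 'v \<Rightarrow> real) \<Rightarrow> ('v \<Rightarrow> 'v \<Rightarrow> real) \<Rightarrow> ('v \<Rightarrow> 'v \<Rightarrow> 'v)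
    \<Rightarrow> ('v \<Rightarrow> 'v) \<Rightarrow> 'v \<Rightarrow> 'v \<Rightarrow> 'v \<Rightarrow> real" where
  "nabla_form q gg Pm p u a b = gg (Pm u a) b + koszul q u (p a) b + koszul q u a (p b)"

text \<open>First derivatives at a point of the structure tensors: q (of the metric), Pm (of phi),
  he (of eta) and hx (of xi), subject to the differentiated structure equations.\<close>
locale phi_derivative_data = metric_f_structure +
  fixes q :: "'v::real_vector \<Rightarrow> 'v \<Rightarrow> 'v \<Rightarrow> real" and Pm :: "'v \<Rightarrow> 'v \<Rightarrow> 'v"
    and he :: "'r::finite \<Rightarrow> 'v \<Rightarrow> 'v \<Rightarrow> real" and hx :: "'r \<Rightarrow> 'v \<Rightarrow> 'v"
  assumes q_linear_dir: "\<And>a b. linear (\<lambda>u. q u a b)" and q_linear_left: "\<And>u b. linear (\<lambda>a. q u a b)"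
    and q_linear_right: "\<And>u a. linear (q u a)" and q_sym: "\<And>u a b. q u a b = q u b a"
    and Pm_linear: "\<And>u. linear (Pm u)" and he_linear: "\<And>al u. linear (he al u)"
    and deriv_skew: "\<And>u a b. q u a (p b) + gg a (Pm u b) + q u b (p a) + gg b (Pm u a) = 0"
    and deriv_compatible: "\<And>u a b. gg (Pm u a) (p b) + q u (p a) (p b) + gg (p a) (Pm u b)
               = q u a b - (\<Sum>al\<in>UNIV. ep al * (he al u a * et al b + et al a * he al u b))"
    and deriv_closed: "\<And>u v w. q u v (p w) + gg v (Pm u w) + q v w (p u) + gg w (Pm v u)
               + q w u (p v) + gg u (Pm w v) = 0"
    and deriv_p_xi: "\<And>u b. Pm u (xi b) = - p (hx b u)"
    and deriv_eta_alt: "\<And>al u w. he al u w - he al w u = 2 * gg u (p w)"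
    and deriv_normal: "\<And>Y Z. Pm (p Y) Z - Pm (p Z) Y + p (Pm Z Y) - p (Pm Y Z)
               + (\<Sum>al\<in>UNIV. (2 * gg Y (p Z)) *\<^sub>R xi al) = 0"
begin

abbreviation kos where "kos \<equiv> koszul q"
abbreviation B where "B \<equiv> nabla_form q gg Pm p"

text \<open>Keta al u w is the covariant derivative (nabla_u eta_al) w.\<close>
definition Keta :: "'r \<Rightarrow> 'v \<Rightarrow> 'v \<Rightarrow> real" where
  "Keta al u w = he al u w - ep al * kos u w (xi al)"

lemma kos_linear_right: "linear (kos u w)"
  unfolding koszul_def
  by (rule linearI) (simp_all add: linear_add[OF q_linear_right] linear_add[OF q_linear_dir]
      linear_scale[OF q_linear_right] linear_scale[OF q_linear_dir] algebra_simps
      add_divide_distrib diff_divide_distrib)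

lemma kos_linear_mid: "linear (\<lambda>w. kos u w z)"
  unfolding koszul_def
  by (rule linearI) (simp_all add: linear_add[OF q_linear_left] linear_add[OF q_linear_dir]
      linear_add[OF q_linear_right] linear_scale[OF q_linear_left] linear_scale[OF q_linear_dir]
      linear_scale[OF q_linear_right] algebra_simps add_divide_distrib diff_divide_distrib)

lemma kos_sym: "kos u w z = kos w u z"
  unfolding koszul_def using q_sym[of z u w] by simp

lemma kos_metric: "kos u a b + kos u b a = q u a b"
  unfolding koszul_def using q_sym[of a u b] q_sym[of b u a] q_sym[of u a b] by (simp add: field_simps)

lemma B_linear_right: "linear (B u a)"
  unfolding nabla_form_def
  by (rule linearI) (simp_all add: linear_add[OF gg_linear] linear_scale[OF gg_linear]
      linear_add[OF kos_linear_right] linear_scale[OF kos_linear_right]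
      linear_add[OF p_linear] linear_scale[OF p_linear] algebra_simps)

lemma B_linear_mid: "linear (\<lambda>a. B u a b)"
  unfolding nabla_form_def
  by (rule linearI) (simp_all add: linear_add[OF gg_linear_left] linear_scale[OF gg_linear_left]
      linear_add[OF kos_linear_mid] linear_scale[OF kos_linear_mid] linear_add[OF p_linear]
      linear_scale[OF p_linear] linear_add[OF Pm_linear] linear_scale[OF Pm_linear] algebra_simps)

lemma Keta_linear: "linear (Keta al u)"
  unfolding Keta_def
  by (rule linearI) (simp_all add: linear_add[OF he_linear] linear_scale[OF he_linear]
      linear_add[OF kos_linear_mid] linear_scale[OF kos_linear_mid] algebra_simps)

text \<open>nabla phi is skew-adjoint, since phi is.\<close>
lemma B_skew: "B u a b = - B u b a"
proof -
  have "B u a b + B u b a = 0"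
    unfolding nabla_form_def using kos_metric[of u "p a" b] kos_metric[of u a "p b"] deriv_skew[of u a b]
      gg_sym q_sym by (smt (verit))
  then show ?thesis by simp
qed

lemma B_p_exchange:
  "B u (p a) b - B u a (p b) = (\<Sum>al\<in>UNIV. ep al * (Keta al u a * et al b + et al a * Keta al u b))"
proof -
  have e1: "kos u a (p (p b)) = - kos u a b + (\<Sum>al\<in>UNIV. et al b * kos u a (xi al))" for a b
    by (simp add: p_square linear_diff[OF kos_linear_right] linear_add[OF kos_linear_right]
        linear_neg[OF kos_linear_right] linear_sum[OF kos_linear_right] linear_scale[OF kos_linear_right])
  have epm: "ep al * (ep al * t) = t" for al t by (metis ep_square mult.assoc mult_1)
  have "B u a (p b) + B u b (p a) = gg (Pm u a) (p b) + gg (Pm u b) (p a) + q u (p a) (p b) - q u a b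
      + (\<Sum>al\<in>UNIV. et al b * kos u a (xi al)) + (\<Sum>al\<in>UNIV. et al a * kos u b (xi al))"
    unfolding nabla_form_def using e1[of a b] e1[of b a] kos_metric[of u "p a" "p b"] kos_metric[of u a b]
    by simp
  also have "\<dots> = - (\<Sum>al\<in>UNIV. ep al * (he al u a * et al b + et al a * he al u b))
      + (\<Sum>al\<in>UNIV. et al b * kos u a (xi al)) + (\<Sum>al\<in>UNIV. et al a * kos u b (xi al))"
    using deriv_compatible[of u a b] gg_sym[of "Pm u b" "p a"] by simp
  also have "\<dots> = - (\<Sum>al\<in>UNIV. ep al * (Keta al u a * et al b + et al a * Keta al u b))"
  proof -
    have "ep al * (Keta al u a * et al b + et al a * Keta al u b)
        = ep al * (he al u a * et al b + et al a * he al u b)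
          - et al b * kos u a (xi al) - et al a * kos u b (xi al)" for al
      unfolding Keta_def by (simp add: algebra_simps epm)
    then show ?thesis by (simp add: sum.distrib sum_subtractf)
  qed
  finally show ?thesis using B_skew[of u "p a" b] by simp
qed

text \<open>Closedness of the fundamental form: the cyclic sum of B vanishes.\<close>
lemma B_cyclic: "B u v w + B v w u + B w u v = 0"
proof -
  have s1: "kos u (p v) w + kos w u (p v) = q u (p v) w" for u v w
    using kos_sym[of w u "p v"] kos_metric[of u "p v" w] by simp
  have "B u v w + B v w u + B w u v = (gg (Pm u v) w + q u (p v) w) + (gg (Pm v w) u + q v (p w) u)
        + (gg (Pm w u) v + q w (p u) v)"
    unfolding nabla_form_def using s1[of u v w] s1[of v w u] s1[of w u v] by simp
  also have "\<dots> = 0"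
    using deriv_skew[of u v w] deriv_skew[of v w u] deriv_skew[of w u v] deriv_closed[of u v w]
      gg_sym q_sym by (smt (verit))
  finally show ?thesis .
qed

text \<open>Normality, read through B.\<close>
lemma B_normal: "B (p Y) Z w - B (p Z) Y w + B Y Z (p w) - B Z Y (p w)
    + 2 * gg Y (p Z) * (\<Sum>al\<in>UNIV. gg (xi al) w) = 0"
proof -
  have "B (p Y) Z w - B (p Z) Y w + B Y Z (p w) - B Z Y (p w)
      = gg (Pm (p Y) Z) w - gg (Pm (p Z) Y) w + gg (Pm Y Z) (p w) - gg (Pm Z Y) (p w)"
    unfolding nabla_form_def using kos_sym by simp
  also have "\<dots> = gg (Pm (p Y) Z - Pm (p Z) Y + p (Pm Z Y) - p (Pm Y Z)) w"
    using gg_p_skew[of "Pm Y Z" w] gg_p_skew[of "Pm Z Y" w]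
    by (simp add: linear_add[OF gg_linear_left] linear_diff[OF gg_linear_left])
  also have "\<dots> = gg (- (\<Sum>al\<in>UNIV. (2 * gg Y (p Z)) *\<^sub>R xi al)) w"
    using deriv_normal[of Y Z] by (metis add_diff_cancel_left' diff_0 diff_add_cancel)
  also have "\<dots> = - 2 * gg Y (p Z) * (\<Sum>al\<in>UNIV. gg (xi al) w)"
    by (simp add: linear_neg[OF gg_linear_left] linear_sum[OF gg_linear_left]
        linear_scale[OF gg_linear_left] sum_distrib_left sum_negf)
  finally show ?thesis by simp
qed

text \<open>d eta = Phi: the antisymmetric part of nabla eta is the fundamental form.\<close>
lemma Keta_alt: "Keta al u w - Keta al w u = 2 * gg u (p w)"
  unfolding Keta_def using deriv_eta_alt[of al u w] kos_sym[of u w "xi al"] by simp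

lemma B_xi_xi: "B u (xi b) (xi c) = 0"
  unfolding nabla_form_def using deriv_p_xi[of u b] p_xi gg_p_skew[of "hx b u" "xi c"]
    linear_0[OF kos_linear_mid] linear_0[OF kos_linear_right] linear_0[OF gg_linear]
    linear_neg[OF gg_linear_left] by simp

lemma B_xi: "B u v (xi b) = - ep b * Keta b u (p v)"
proof -
  have vdec: "v = p (- p v) + (\<Sum>al\<in>UNIV. et al v *\<^sub>R xi al)"
    using p_square[of v] linear_neg[OF p_linear] by simp
  have "B u (xi b) v = B u (xi b) (p (- p v)) + (\<Sum>al\<in>UNIV. et al v * B u (xi b) (xi al))"
    by (subst vdec) (simp add: linear_add[OF B_linear_right] linear_sum[OF B_linear_right]
        linear_scale[OF B_linear_right])
  also have "\<dots> = B u (xi b) (p (- p v))" using B_xi_xi by simp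
  finally have e1: "B u (xi b) v = B u (xi b) (p (- p v))" .
  have "\<And>al. et al (- p v) = 0" using linear_neg[OF et_linear] et_p by simp
  then have h: "\<And>al. ep al * (Keta al u (xi b) * et al (- p v) + et al (xi b) * Keta al u (- p v))
      = (if al = b then ep b * Keta b u (- p v) else 0)"
    using et_xi by simp
  have "- B u (xi b) (p (- p v)) = (\<Sum>al\<in>UNIV. (if al = b then ep b * Keta b u (- p v) else 0))"
    using B_p_exchange[of u "xi b" "- p v"] p_xi linear_0[OF B_linear_mid] by (simp only: h; simp)
  also have "\<dots> = ep b * Keta b u (- p v)" by simp
  finally show ?thesis using e1 B_skew[of u v "xi b"] linear_neg[OF Keta_linear] by simp
qed

lemma B_twice:
  assumes etZ: "\<And>al. et al Z = 0"
  shows "2 * B X Y Z = (\<Sum>al\<in>UNIV. ep al * et al Y * (Keta al X (p Z) - Keta al (p Z) X)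
      + ep al * et al X * ((Keta al Y (p Z) - Keta al (p Z) Y) - (Keta al Z (p Y) - Keta al (p Y) Z)))"
proof -
  have pZ2: "p (p Z) = - Z" using p_square_horizontal etZ .
  have S2: "B X (p Y) (p Z) = - B X Y Z + (\<Sum>al\<in>UNIV. ep al * (et al Y * Keta al X (p Z)))"
    using B_p_exchange[of X Y "p Z"] et_p pZ2 linear_neg[OF B_linear_right] by simp
  have S3: "B (p Y) (p Z) X - B (p Y) Z (p X) = (\<Sum>al\<in>UNIV. ep al * (Keta al (p Y) Z * et al X))"
    using B_p_exchange[of "p Y" Z X] etZ by simp
  have S4: "B (p Z) (p Y) X - B (p Z) Y (p X) =
      (\<Sum>al\<in>UNIV. ep al * (Keta al (p Z) Y * et al X + et al Y * Keta al (p Z) X))"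
    using B_p_exchange[of "p Z" Y X] by simp
  have S5: "B (p Y) Z (p X) - B (p Z) Y (p X) + B Y Z (p (p X)) - B Z Y (p (p X)) = 0"
    using B_normal[of Y Z "p X"] gg_xi_p by simp
  have pp_right: "B u v (p (p X)) = - B u v X + (\<Sum>al\<in>UNIV. et al X * B u v (xi al))" for u v
    by (simp add: p_square linear_diff[OF B_linear_right] linear_add[OF B_linear_right] linear_neg[OF B_linear_right]
        linear_sum[OF B_linear_right] linear_scale[OF B_linear_right])
  have S8: "B (p Y) (p Z) X - B (p Z) (p Y) X = - B X (p Y) (p Z)"
    using B_skew[of "p Z" "p Y" X] B_cyclic[of X "p Y" "p Z"] by linarith
  have S9: "- B Y Z X + B Z Y X = B X Y Z"
    using B_skew[of Z Y X] B_cyclic[of X Y Z] by linarith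
  have "2 * B X Y Z = (\<Sum>al\<in>UNIV. ep al * (et al Y * Keta al X (p Z)))
      + (\<Sum>al\<in>UNIV. ep al * (Keta al (p Y) Z * et al X))
      - (\<Sum>al\<in>UNIV. ep al * (Keta al (p Z) Y * et al X + et al Y * Keta al (p Z) X))
      - (\<Sum>al\<in>UNIV. et al X * B Y Z (xi al)) + (\<Sum>al\<in>UNIV. et al X * B Z Y (xi al))"
    using S2 S3 S4 S5 pp_right[of Y Z] pp_right[of Z Y] S8 S9 by linarith
  also have "\<dots> = (\<Sum>al\<in>UNIV. ep al * (et al Y * Keta al X (p Z)) + ep al * (Keta al (p Y) Z * et al X)
      - ep al * (Keta al (p Z) Y * et al X + et al Y * Keta al (p Z) X)
      - et al X * B Y Z (xi al) + et al X * B Z Y (xi al))"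
    by (simp add: sum.distrib sum_subtractf)
  also have "\<dots> = (\<Sum>al\<in>UNIV. ep al * et al Y * (Keta al X (p Z) - Keta al (p Z) X)
      + ep al * et al X * ((Keta al Y (p Z) - Keta al (p Z) Y) - (Keta al Z (p Y) - Keta al (p Y) Z)))"
    by (rule sum.cong) (auto simp: B_xi algebra_simps)
  finally show ?thesis .
qed

lemma B_vanishes:
  assumes XZ: "gg X Z = 0" and YZ: "gg Y Z = 0" and etZ: "\<And>al. et al Z = 0"
    and xiZ: "\<And>al. gg (xi al) Z = 0"
  shows "B X Y Z = 0"
proof -
  have pZ2: "p (p Z) = - Z" using p_square_horizontal etZ .
  have K1: "Keta al X (p Z) - Keta al (p Z) X = 0" for al
    using Keta_alt[of al X "p Z"] pZ2 XZ linear_neg[OF gg_linear] by simp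
  have K2: "Keta al Y (p Z) - Keta al (p Z) Y = 0" for al
    using Keta_alt[of al Y "p Z"] pZ2 YZ linear_neg[OF gg_linear] by simp
  have K3: "Keta al Z (p Y) - Keta al (p Y) Z = 0" for al
  proof -
    have "gg Z (p (p Y)) = 0"
      using p_square[of Y] YZ xiZ gg_sym
      by (simp add: linear_diff[OF gg_linear] linear_add[OF gg_linear] linear_neg[OF gg_linear] linear_sum[OF gg_linear]
          linear_scale[OF gg_linear])
    then show ?thesis using Keta_alt[of al Z "p Y"] by simp
  qed
  show ?thesis using B_twice[OF etZ, of X Y] K1 K2 K3 by simp
qed

end

section \<open>Calculus tools\<close>

lemma has_field_derivative_along_line:
  fixes f :: "'a::real_normed_vector \<Rightarrow> real"
  assumes "(f has_derivative F) (at (a + s *\<^sub>R v))"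
  shows "((\<lambda>s. f (a + s *\<^sub>R v)) has_field_derivative F v) (at s)"
proof -
  have l: "((\<lambda>s. a + s *\<^sub>R v) has_derivative (\<lambda>h. h *\<^sub>R v)) (at s)"
    by (auto intro!: derivative_eq_intros)
  have "((f \<circ> (\<lambda>s. a + s *\<^sub>R v)) has_derivative (F \<circ> (\<lambda>h. h *\<^sub>R v))) (at s)"
    by (rule diff_chain_at[OF l assms])
  moreover have "linear F" using has_derivative_linear[OF assms] .
  ultimately show ?thesis
    by (intro has_derivative_imp_has_field_derivative[where D="F \<circ> (\<lambda>h. h *\<^sub>R v)"])
       (auto simp: o_def linear_scale)
qed

text \<open>Two applications of the mean value theorem: the second difference of f over a small square
  spanned by t a and t b equals t^2 times a mixed second derivative at a nearby point.\<close>
lemma second_difference_mean_value: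
  fixes f :: "'a::real_normed_vector \<Rightarrow> real"
  assumes Df: "\<And>y. y \<in> U \<Longrightarrow> (f has_derivative F y) (at y)"
    and DF: "\<And>y. y \<in> U \<Longrightarrow> ((\<lambda>z. F z a) has_derivative G y) (at y)"
    and sub: "ball x d \<subseteq> U" and t: "0 < t" "2*t < d" and na: "norm a = 1" "norm b = 1"
  shows "\<exists>p. dist p x \<le> 2*t \<and>
    f (x + t *\<^sub>R a + t *\<^sub>R b) - f (x + t *\<^sub>R a) - f (x + t *\<^sub>R b) + f x = t * t * G p b"
proof -
  have inU: "x + s *\<^sub>R a + r *\<^sub>R b \<in> U" and dle: "dist (x + s *\<^sub>R a + r *\<^sub>R b) x \<le> 2*t"
    if "0 \<le> s" "s \<le> t" "0 \<le> r" "r \<le> t" for s r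
  proof -
    have "dist (x + s *\<^sub>R a + r *\<^sub>R b) x = norm (s *\<^sub>R a + r *\<^sub>R b)"
      by (simp add: dist_norm)
    also have "\<dots> \<le> norm (s *\<^sub>R a) + norm (r *\<^sub>R b)" by (rule norm_triangle_ineq)
    also have "\<dots> = s + r" using that na by simp
    finally show "dist (x + s *\<^sub>R a + r *\<^sub>R b) x \<le> 2*t" using that by linarith
    then have "x + s *\<^sub>R a + r *\<^sub>R b \<in> ball x d" using t by (simp add: dist_commute)
    then show "x + s *\<^sub>R a + r *\<^sub>R b \<in> U" using sub by blast
  qed
  define ph where "ph s = f (x + t *\<^sub>R b + s *\<^sub>R a) - f (x + s *\<^sub>R a)" for s
  have dph: "DERIV ph s :> (F (x + s *\<^sub>R a + t *\<^sub>R b) a - F (x + s *\<^sub>R a) a)"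
    if "0 \<le> s" "s \<le> t" for s
  proof -
    have u1: "x + t *\<^sub>R b + s *\<^sub>R a \<in> U" using inU[of s t] that t by (simp add: add_ac)
    have u2: "x + s *\<^sub>R a \<in> U" using inU[of s 0] that t by simp
    have e: "x + t *\<^sub>R b + s *\<^sub>R a = x + s *\<^sub>R a + t *\<^sub>R b" by (simp add: add_ac)
    show ?thesis unfolding ph_def
      using DERIV_diff[OF has_field_derivative_along_line[OF Df[OF u1]]
          has_field_derivative_along_line[of f "F (x + s *\<^sub>R a)" x s a]] Df[OF u2] e
      by simp
  qed
  obtain sg where sg: "0 < sg" "sg < t"
    "ph t - ph 0 = (t - 0) * (F (x + sg *\<^sub>R a + t *\<^sub>R b) a - F (x + sg *\<^sub>R a) a)"
    using MVT2[OF t(1) dph] by blast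
  define ps where "ps r = F (x + sg *\<^sub>R a + r *\<^sub>R b) a" for r
  have dps: "DERIV ps r :> G (x + sg *\<^sub>R a + r *\<^sub>R b) b" if "0 \<le> r" "r \<le> t" for r
    unfolding ps_def using has_field_derivative_along_line[OF DF] inU[of sg r] that sg by simp
  obtain tau where tau: "0 < tau" "tau < t" "ps t - ps 0 = (t - 0) * G (x + sg *\<^sub>R a + tau *\<^sub>R b) b"
    using MVT2[OF t(1) dps] by blast
  have "f (x + t *\<^sub>R a + t *\<^sub>R b) - f (x + t *\<^sub>R a) - f (x + t *\<^sub>R b) + f x = ph t - ph 0"
    unfolding ph_def by (simp add: add_ac)
  also have "\<dots> = t * t * G (x + sg *\<^sub>R a + tau *\<^sub>R b) b"
    using sg(3) tau(3) unfolding ps_def by simp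
  finally show ?thesis using dle[of sg tau] sg tau by (intro exI[of _ "x + sg *\<^sub>R a + tau *\<^sub>R b"]) auto
qed

lemma mixed_partials_symmetric:
  fixes f :: "'a::real_normed_vector \<Rightarrow> real"
  assumes U: "open U" "x \<in> U"
    and Df: "\<And>y. y \<in> U \<Longrightarrow> (f has_derivative F y) (at y)"
    and DFa: "\<And>y. y \<in> U \<Longrightarrow> ((\<lambda>z. F z a) has_derivative Ga y) (at y)"
    and DFb: "\<And>y. y \<in> U \<Longrightarrow> ((\<lambda>z. F z b) has_derivative Gb y) (at y)"
    and ca: "continuous_on U (\<lambda>y. Ga y b)" and cb: "continuous_on U (\<lambda>y. Gb y a)"
    and na: "norm a = 1" "norm b = 1"
  shows "Ga x b = Gb x a"
proof (rule ccontr)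
  assume ne: "Ga x b \<noteq> Gb x a"
  define e where "e = \<bar>Ga x b - Gb x a\<bar> / 2"
  have e: "e > 0" using ne unfolding e_def by simp
  obtain d0 where d0: "d0 > 0" "ball x d0 \<subseteq> U" using U open_contains_ball by blast
  have cxa: "continuous (at x) (\<lambda>y. Ga y b)" using ca U by (simp add: continuous_on_eq_continuous_at)
  have cxb: "continuous (at x) (\<lambda>y. Gb y a)" using cb U by (simp add: continuous_on_eq_continuous_at)
  obtain d1 where d1: "d1 > 0" "\<And>y. dist y x < d1 \<Longrightarrow> dist (Ga y b) (Ga x b) < e"
    using cxa e unfolding continuous_at_eps_delta by (metis (no_types, lifting))
  obtain d2 where d2: "d2 > 0" "\<And>y. dist y x < d2 \<Longrightarrow> dist (Gb y a) (Gb x a) < e"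
    using cxb e unfolding continuous_at_eps_delta by (metis (no_types, lifting))
  define t where "t = min d0 (min d1 d2) / 4"
  have t: "0 < t" "2*t < d0" "2*t < d1" "2*t < d2" using d0 d1 d2 unfolding t_def by auto
  obtain p where p: "dist p x \<le> 2*t"
    "f (x + t *\<^sub>R a + t *\<^sub>R b) - f (x + t *\<^sub>R a) - f (x + t *\<^sub>R b) + f x = t * t * Ga p b"
    using second_difference_mean_value[OF Df DFa d0(2) t(1,2) na] by blast
  obtain p' where p': "dist p' x \<le> 2*t"
    "f (x + t *\<^sub>R b + t *\<^sub>R a) - f (x + t *\<^sub>R b) - f (x + t *\<^sub>R a) + f x = t * t * Gb p' a"
    using second_difference_mean_value[OF Df DFb d0(2) t(1,2) na(2,1)] by blast
  have xe: "x + t *\<^sub>R b + t *\<^sub>R a = x + t *\<^sub>R a + t *\<^sub>R b" by (simp add: add_ac)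
  have "t * t * Ga p b = t * t * Gb p' a" using p(2) p'(2) unfolding xe by linarith
  then have eq: "Ga p b = Gb p' a" using t(1) by simp
  have "\<bar>Ga p b - Ga x b\<bar> < e" using d1(2)[of p] p(1) t unfolding dist_real_def by linarith
  moreover have "\<bar>Gb p' a - Gb x a\<bar> < e" using d2(2)[of p'] p'(1) t unfolding dist_real_def by linarith
  ultimately show False using eq unfolding e_def by (simp add: abs_less_iff abs_if split: if_splits)
qed

lemma smoothk_const: "smoothk k U (\<lambda>y. c)"
  by (induction k arbitrary: c) simp_all

lemma smooth_const: "smooth_on U (\<lambda>y. c)"
  unfolding smooth_on_def using smoothk_const by blast

lemma smooth_has_derivative:
  assumes "smooth_on U f" "open U" "y \<in> U"
  shows "(f has_derivative frechet_derivative f (at y)) (at y)"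
proof -
  have "smoothk (Suc 0) U f" using assms(1) unfolding smooth_on_def by blast
  then have "f differentiable (at y)"
    using assms(2,3) differentiable_on_eq_differentiable_at by auto
  then show ?thesis using frechet_derivative_works by blast
qed

lemma smooth_partial:
  assumes "smooth_on U f"
  shows "smooth_on U (\<lambda>y. frechet_derivative f (at y) (axis i 1))"
  using assms unfolding smooth_on_def by (metis smoothk.simps(2))

lemma smooth_continuous: "smooth_on U f \<Longrightarrow> continuous_on U f"
  unfolding smooth_on_def by (metis smoothk.simps(1))

lemma has_derivative_locally_constant:
  assumes "(f has_derivative f') (at x)" "open U" "x \<in> U" "\<And>y. y \<in> U \<Longrightarrow> f y = c"
  shows "f' h = 0"
proof -
  have "(f has_derivative (\<lambda>h. 0)) (at x)"
    by (rule has_derivative_transform_within_open[OF has_derivative_const assms(2,3)]) (simp add: assms(4))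
  then have "f' = (\<lambda>h. 0)" using has_derivative_unique assms(1) by blast
  then show ?thesis by simp
qed

lemma has_derivative_square_one:
  fixes f :: "'a::real_normed_vector \<Rightarrow> real"
  assumes "(f has_derivative f') (at x)" "open U" "x \<in> U" "\<And>y. y \<in> U \<Longrightarrow> f y * f y = 1"
  shows "f' h = 0"
proof -
  have "f x * f' h + f' h * f x = 0"
    by (rule has_derivative_locally_constant[OF has_derivative_mult[OF assms(1) assms(1)] assms(2-4)])
  moreover have "f x \<noteq> 0" using assms(4)[OF assms(3)] by auto
  ultimately show ?thesis by (simp add: mult.commute)
qed

definition second_deriv :: "(real^'m \<Rightarrow> 'b::real_normed_vector) \<Rightarrow> real^'m \<Rightarrow> real^'m \<Rightarrow> real^'m \<Rightarrow> 'b" where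
  "second_deriv f x u v =
     (\<Sum>k\<in>UNIV. v $ k *\<^sub>R frechet_derivative (\<lambda>y. frechet_derivative f (at y) (axis k 1)) (at x) u)"

lemma second_partials_symmetric:
  fixes f :: "real^'m \<Rightarrow> 'b::euclidean_space"
  assumes f: "smooth_on U f" and U: "open U" "x \<in> U"
  shows "frechet_derivative (\<lambda>y. frechet_derivative f (at y) (axis k 1)) (at x) (axis l 1)
       = frechet_derivative (\<lambda>y. frechet_derivative f (at y) (axis l 1)) (at x) (axis k 1)"
proof (rule euclidean_eqI)
  fix c :: 'b
  let ?h = "\<lambda>j y. frechet_derivative f (at y) (axis j 1)"
  have sh: "smooth_on U (?h j)" for j by (rule smooth_partial[OF f])
  have Df: "((\<lambda>y. f y \<bullet> c) has_derivative (\<lambda>v. frechet_derivative f (at y) v \<bullet> c)) (at y)"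
    if "y \<in> U" for y
    using has_derivative_inner[OF smooth_has_derivative[OF f U(1) that] has_derivative_const[of c]] by simp
  have DF: "((\<lambda>z. frechet_derivative f (at z) (axis j 1) \<bullet> c) has_derivative
      (\<lambda>v. frechet_derivative (?h j) (at y) v \<bullet> c)) (at y)" if "y \<in> U" for y j
    using has_derivative_inner[OF smooth_has_derivative[OF sh U(1) that] has_derivative_const[of c]] by simp
  have cc: "continuous_on U (\<lambda>y. frechet_derivative (?h j) (at y) (axis i 1) \<bullet> c)" for i j
    by (intro continuous_intros smooth_continuous smooth_partial sh)
  show "frechet_derivative (?h k) (at x) (axis l 1) \<bullet> c = frechet_derivative (?h l) (at x) (axis k 1) \<bullet> c"
    by (rule mixed_partials_symmetric[OF U Df DF DF cc cc]) simp_all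
qed

lemma second_deriv_symmetric:
  fixes f :: "real^'m \<Rightarrow> 'b::euclidean_space"
  assumes f: "smooth_on U f" and U: "open U" "x \<in> U"
  shows "second_deriv f x u v = second_deriv f x v u"
proof -
  define H where "H k = frechet_derivative (\<lambda>y. frechet_derivative f (at y) (axis k 1)) (at x)" for k
  have linH: "linear (H k)" for k
    unfolding H_def using has_derivative_linear[OF smooth_has_derivative[OF smooth_partial[OF f] U]] .
  have Hexp: "H k u = (\<Sum>l\<in>UNIV. u $ l *\<^sub>R H k (axis l 1))" for k u
  proof -
    have "H k u = H k (\<Sum>l\<in>UNIV. u $ l *\<^sub>R axis l 1)"
      using basis_expansion[of u] by (simp add: scalar_mult_eq_scaleR)
    then show ?thesis by (simp add: linear_sum[OF linH] linear_scale[OF linH])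
  qed
  have sw: "H k (axis l 1) = H l (axis k 1)" for k l
    unfolding H_def by (rule second_partials_symmetric[OF f U])
  have "second_deriv f x u v = (\<Sum>k\<in>UNIV. \<Sum>l\<in>UNIV. (v $ k * u $ l) *\<^sub>R H k (axis l 1))"
    unfolding second_deriv_def H_def[symmetric] by (subst Hexp) (simp add: scaleR_sum_right)
  also have "\<dots> = (\<Sum>l\<in>UNIV. \<Sum>k\<in>UNIV. (u $ l * v $ k) *\<^sub>R H l (axis k 1))"
    by (subst sum.swap) (simp add: sw mult.commute)
  also have "\<dots> = second_deriv f x v u"
    unfolding second_deriv_def H_def[symmetric] by (subst (2) Hexp) (simp add: scaleR_sum_right)
  finally show ?thesis .
qed

lemma has_derivative_directional_derivative:
  fixes f :: "real^'m \<Rightarrow> 'b::euclidean_space"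
  assumes f: "smooth_on U f" and U: "open U" "x \<in> U"
  shows "((\<lambda>y. frechet_derivative f (at y) v) has_derivative (\<lambda>u. second_deriv f x u v)) (at x)"
proof -
  let ?h = "\<lambda>k y. frechet_derivative f (at y) (axis k 1)"
  have expand: "frechet_derivative f (at y) v = (\<Sum>k\<in>UNIV. v $ k *\<^sub>R ?h k y)" if "y \<in> U" for y
  proof -
    have lin: "linear (frechet_derivative f (at y))"
      using has_derivative_linear[OF smooth_has_derivative[OF f U(1) that]] .
    have "frechet_derivative f (at y) v = frechet_derivative f (at y) (\<Sum>k\<in>UNIV. v $ k *\<^sub>R axis k 1)"
      using basis_expansion[of v] by (simp add: scalar_mult_eq_scaleR)
    then show ?thesis by (simp add: linear_sum[OF lin] linear_scale[OF lin])
  qed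
  have "((\<lambda>y. \<Sum>k\<in>UNIV. v $ k *\<^sub>R ?h k y) has_derivative (\<lambda>u. second_deriv f x u v)) (at x)"
    unfolding second_deriv_def
    by (intro has_derivative_sum has_derivative_scaleR_right
        smooth_has_derivative[OF smooth_partial[OF f] U])
  then show ?thesis
    by (rule has_derivative_transform_within_open[OF _ U]) (simp add: expand)
qed

lemma bounded_bilinear_matrix_vector_mult:
  "bounded_bilinear (\<lambda>(A::real^'n^'m) (v::real^'n). A *v v)"
proof -
  have "bilinear (\<lambda>(A::real^'n^'m) (v::real^'n). A *v v)"
    unfolding bilinear_def
    by (auto intro!: linearI simp: matrix_vector_mult_add_rdistrib scaleR_matrix_vector_assoc
        matrix_vector_right_distrib matrix_vector_mult_scaleR)
  then show ?thesis using bilinear_conv_bounded_bilinear by blast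
qed

lemma has_derivative_matrix_vector_mult:
  fixes A :: "'a::real_normed_vector \<Rightarrow> real^'n^'m" and v :: "'a \<Rightarrow> real^'n"
  assumes "(A has_derivative A') (at x)" "(v has_derivative v') (at x)"
  shows "((\<lambda>y. A y *v v y) has_derivative (\<lambda>h. A x *v v' h + A' h *v v x)) (at x)"
  using bounded_bilinear.FDERIV[OF bounded_bilinear_matrix_vector_mult assms] by simp

lemma has_derivative_matrix_vector_const:
  fixes A :: "'a::real_normed_vector \<Rightarrow> real^'n^'m"
  assumes "(A has_derivative A') (at x)"
  shows "((\<lambda>y. A y *v c) has_derivative (\<lambda>h. A' h *v c)) (at x)"
  using has_derivative_matrix_vector_mult[OF assms has_derivative_const[of c]] by simp

lemma frechet_derivative_matrix_vector_const:
  fixes A :: "'a::real_normed_vector \<Rightarrow> real^'n^'m"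
  assumes "(A has_derivative A') (at x)"
  shows "frechet_derivative (\<lambda>y. A y *v c) (at x) = (\<lambda>h. A' h *v c)"
  using frechet_derivative_at[OF has_derivative_matrix_vector_const[OF assms]] by simp

lemma frechet_derivative_inner_const:
  fixes f :: "'a::real_normed_vector \<Rightarrow> real^'n"
  assumes "(f has_derivative f') (at x)"
  shows "frechet_derivative (\<lambda>y. f y \<bullet> c) (at x) = (\<lambda>h. f' h \<bullet> c)"
proof -
  have "((\<lambda>y. f y \<bullet> c) has_derivative (\<lambda>h. f' h \<bullet> c)) (at x)"
    using has_derivative_inner[OF assms has_derivative_const[of c]] by simp
  then show ?thesis using frechet_derivative_at by metis
qed

lemma has_derivative_metric_phi:
  fixes G Phi :: "real^'m \<Rightarrow> real^'m^'m"
  assumes "(G has_derivative Q) (at x)" "(Phi has_derivative P) (at x)"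
  shows "((\<lambda>y. a \<bullet> (G y *v (Phi y *v b))) has_derivative
           (\<lambda>h. a \<bullet> (G x *v (P h *v b)) + a \<bullet> (Q h *v (Phi x *v b)))) (at x)"
  using has_derivative_inner[OF has_derivative_const[of a]
      has_derivative_matrix_vector_mult[OF assms(1) has_derivative_matrix_vector_const[OF assms(2)]]]
  by (simp add: inner_add_right)

lemma symmetric_matrix_inner: "transpose A = A \<Longrightarrow> u \<bullet> ((A::real^'n^'n) *v v) = v \<bullet> (A *v u)"
  by (metis dot_lmul_matrix inner_commute transpose_matrix_vector)

lemma gb_sym: "transpose (G x) = G x \<Longrightarrow> gb G x u v = gb G x v u"
  unfolding gb_def by (rule symmetric_matrix_inner)

text \<open>Rank-nullity for matrices: the kernel is the orthogonal complement of the row space.\<close>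
lemma matrix_kernel_dim: "dim {v. (A::real^'n^'m) *v v = 0} + rank A = CARD('n)"
proof -
  let ?K = "{v. A *v v = 0}"
  let ?R = "range (\<lambda>z. transpose A *v z)"
  have subR: "subspace ?R" by (rule linear_subspace_image[OF matrix_vector_mul_linear subspace_UNIV])
  have orth: "{w \<in> UNIV. \<forall>x \<in> ?R. orthogonal x w} = ?K"
  proof (intro set_eqI iffI)
    fix w assume "w \<in> {w \<in> UNIV. \<forall>x \<in> ?R. orthogonal x w}"
    then have "orthogonal (transpose A *v (A *v w)) w" by blast
    then have "(A *v w) \<bullet> (A *v w) = 0" unfolding orthogonal_def by (simp add: dot_lmul_matrix)
    then show "w \<in> ?K" by simp
  qed (auto simp: orthogonal_def dot_lmul_matrix)
  have "dim {w \<in> UNIV. \<forall>x \<in> ?R. orthogonal x w} + dim ?R = dim (UNIV :: (real^'n) set)"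
    by (rule dim_subspace_orthogonal_to_vectors[OF subR subspace_UNIV]) simp
  moreover have "dim ?R = rank A" by (metis rank_dim_range rank_transpose)
  ultimately show ?thesis unfolding orth by simp
qed

lemma christoffel_koszul:
  fixes G :: "real^'m \<Rightarrow> real^'m^'m"
  assumes sym: "transpose (G x) = G x" and inv: "invertible (G x)"
    and linQ: "linear (frechet_derivative G (at x))"
  shows "gb G x (christoffel G x u w) z =
     koszul (\<lambda>u a b. a \<bullet> (frechet_derivative G (at x) u *v b)) u w z"
proof -
  let ?Q = "frechet_derivative G (at x)"
  define c where "c = (\<chi> l. w \<bullet> (?Q u *v axis l 1) + u \<bullet> (?Q w *v axis l 1) - u \<bullet> (?Q (axis l 1) *v w))"
  have coord: "(\<Sum>l\<in>UNIV. z $ l * (w' \<bullet> (A *v axis l 1))) = w' \<bullet> (A *v z)" for A :: "real^'m^'m" and w'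
  proof -
    have "w' \<bullet> (A *v z) = w' \<bullet> (A *v (\<Sum>l\<in>UNIV. z $ l *\<^sub>R axis l 1))"
      using basis_expansion[of z] by (simp add: scalar_mult_eq_scaleR)
    then show ?thesis
      by (simp add: linear_sum[OF matrix_vector_mul_linear] matrix_vector_mult_scaleR inner_sum_right)
  qed
  have coordQ: "(\<Sum>l\<in>UNIV. z $ l * (u \<bullet> (?Q (axis l 1) *v w))) = u \<bullet> (?Q z *v w)"
  proof -
    have "?Q z = ?Q (\<Sum>l\<in>UNIV. z $ l *\<^sub>R axis l 1)"
      using basis_expansion[of z] by (simp add: scalar_mult_eq_scaleR)
    moreover have linL: "linear (\<lambda>A::real^'m^'m. A *v w)"
      by (rule bounded_linear.linear[OF bounded_bilinear.bounded_linear_left[OF bounded_bilinear_matrix_vector_mult]])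
    ultimately have "?Q z *v w = (\<Sum>l\<in>UNIV. z $ l *\<^sub>R (?Q (axis l 1) *v w))"
      by (simp add: linear_sum[OF linQ] linear_scale[OF linQ] linear_sum[OF linL] linear_scale[OF linL])
    then show ?thesis by (simp add: inner_sum_right)
  qed
  have gm: "G x ** matrix_inv (G x) = mat 1"
    using inv unfolding invertible_def matrix_inv_def by (metis (mono_tags, lifting) someI_ex)
  have "gb G x (christoffel G x u w) z = (1/2) * ((matrix_inv (G x) *v c) \<bullet> (G x *v z))"
    unfolding gb_def christoffel_def c_def by simp
  also have "(matrix_inv (G x) *v c) \<bullet> (G x *v z) = (G x *v (matrix_inv (G x) *v c)) \<bullet> z"
    using symmetric_matrix_inner[OF sym] by (metis inner_commute)
  also have "\<dots> = c \<bullet> z" by (simp add: matrix_vector_mul_assoc gm)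
  also have "c \<bullet> z = (\<Sum>l\<in>UNIV. z $ l * (w \<bullet> (?Q u *v axis l 1)))
      + (\<Sum>l\<in>UNIV. z $ l * (u \<bullet> (?Q w *v axis l 1))) - (\<Sum>l\<in>UNIV. z $ l * (u \<bullet> (?Q (axis l 1) *v w)))"
    unfolding c_def inner_vec_def by (simp add: algebra_simps sum.distrib sum_subtractf)
  finally show ?thesis unfolding koszul_def coord coordQ by simp
qed

lemma S_manifold_pointwise:
  assumes "indef_S_manifold U n Phi xi eta G" "y \<in> U"
  shows "transpose (G y) = G y" "invertible (G y)" "rank (Phi y) = 2 * n"
    "\<And>v. Phi y *v (Phi y *v v) = - v + (\<Sum>a\<in>UNIV. (eta a y \<bullet> v) *\<^sub>R xi a y)"
    "\<And>a b. eta a y \<bullet> xi b y = (if a = b then 1 else 0)"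
    "\<And>a. gb G y (xi a y) (xi a y) = 1 \<or> gb G y (xi a y) (xi a y) = -1"
    "\<And>u v. gb G y (Phi y *v u) (Phi y *v v) =
            gb G y u v - (\<Sum>a\<in>UNIV. gb G y (xi a y) (xi a y) * (eta a y \<bullet> u) * (eta a y \<bullet> v))"
  using assms unfolding indef_S_manifold_def by auto

lemma S_manifold_smooth:
  assumes "indef_S_manifold U n Phi xi eta G"
  shows "open U" "smooth_on U Phi" "smooth_on U G" "\<And>a. smooth_on U (xi a)" "\<And>a. smooth_on U (eta a)"
  using assms unfolding indef_S_manifold_def by auto

lemma S_manifold_d_eta_const:
  assumes "indef_S_manifold U n Phi xi eta G" "y \<in> U"
  shows "d_form (eta al) (\<lambda>_. a) (\<lambda>_. b) y = gb G y a (Phi y *v b)"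
  using assms smooth_const unfolding indef_S_manifold_def by blast

lemma S_manifold_normal_const:
  assumes "indef_S_manifold U n Phi xi eta G" "y \<in> U"
  shows "nijenhuis Phi (\<lambda>_. a) (\<lambda>_. b) y
      + (\<Sum>al\<in>UNIV. (2 * d_form (eta al) (\<lambda>_. a) (\<lambda>_. b) y) *\<^sub>R xi al y) = 0"
  using assms smooth_const unfolding indef_S_manifold_def by blast

lemma d_form_antisym: "d_form e X Y x = - d_form e Y X x"
  unfolding d_form_def lie_def by (simp add: inner_diff_right algebra_simps)

text \<open>phi is skew-adjoint, because g(a, phi b) = d eta(a,b) is alternating.\<close>
lemma phi_skew:
  assumes "indef_S_manifold U n Phi xi eta G" "y \<in> U"
  shows "gb G y (Phi y *v a) b = - gb G y a (Phi y *v b)"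
proof -
  have "gb G y a (Phi y *v b) = - gb G y b (Phi y *v a)"
    using S_manifold_d_eta_const[OF assms, of undefined a b] S_manifold_d_eta_const[OF assms, of undefined b a]
      d_form_antisym[of "eta undefined" "\<lambda>_. a" "\<lambda>_. b" y] by simp
  moreover have "gb G y (Phi y *v a) b = gb G y b (Phi y *v a)"
    by (rule gb_sym[of G y, OF S_manifold_pointwise(1)[OF assms]])
  ultimately show ?thesis by linarith
qed

text \<open>phi xi = 0: the kernel of phi lies in the span of the xi by phi^2 = -I + sum eta (x) xi,
  and has dimension r by the rank condition, so it equals that span.\<close>
lemma phi_xi_zero:
  fixes Phi :: "real^'m \<Rightarrow> real^'m^'m" and xi :: "'r::finite \<Rightarrow> real^'m \<Rightarrow> real^'m"
  assumes IS: "indef_S_manifold U n Phi xi eta G" and y: "y \<in> U"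
  shows "Phi y *v xi al y = 0"
proof -
  let ?K = "{v. Phi y *v v = 0}"
  let ?X = "range (\<lambda>a. xi a y)"
  have subK: "subspace ?K"
    by (auto simp: subspace_def matrix_vector_right_distrib matrix_vector_mult_scaleR)
  have KX: "?K \<subseteq> span ?X"
  proof
    fix v assume "v \<in> ?K"
    then have "v = (\<Sum>a\<in>UNIV. (eta a y \<bullet> v) *\<^sub>R xi a y)"
      using S_manifold_pointwise(4)[OF IS y, of v] by simp
    also have "\<dots> \<in> span ?X" by (intro span_sum span_scale span_base) auto
    finally show "v \<in> span ?X" .
  qed
  have "dim ?K = CARD('r)"
    using matrix_kernel_dim[of "Phi y"] S_manifold_pointwise(3)[OF IS y] IS
    unfolding indef_S_manifold_def by simp
  moreover have "dim (span ?X) \<le> card ?X" by (rule dim_le_card) auto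
  moreover have "card ?X \<le> CARD('r)" by (rule card_image_le) simp
  ultimately have "?K = span ?X" using subspace_dim_equal[OF subK subspace_span KX] by simp
  then show ?thesis by (auto intro: span_base)
qed

lemma xi_norm_square:
  assumes "indef_S_manifold U n Phi xi eta G" "y \<in> U"
  shows "gb G y (xi al y) (xi al y) * gb G y (xi al y) (xi al y) = 1"
  using S_manifold_pointwise(6)[OF assms, of al] by auto

lemma eta_by_metric:
  assumes IS: "indef_S_manifold U n Phi xi eta G" and y: "y \<in> U"
  shows "eta al y \<bullet> v = gb G y (xi al y) (xi al y) * gb G y (xi al y) v"
proof -
  let ?e = "\<lambda>a. gb G y (xi a y) (xi a y)"
  have "?e a * (eta a y \<bullet> xi al y) * (eta a y \<bullet> v) = (if a = al then ?e al * (eta al y \<bullet> v) else 0)" for a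
    using S_manifold_pointwise(5)[OF IS y, of a al] by simp
  then have "(\<Sum>a\<in>UNIV. ?e a * (eta a y \<bullet> xi al y) * (eta a y \<bullet> v)) = ?e al * (eta al y \<bullet> v)"
    by simp
  moreover have "gb G y (Phi y *v xi al y) (Phi y *v v) = 0"
    using phi_xi_zero[OF IS y] unfolding gb_def by simp
  ultimately have "?e al * (eta al y \<bullet> v) = gb G y (xi al y) v"
    using S_manifold_pointwise(7)[OF IS y, of "xi al y" v] by simp
  then have "?e al * (?e al * (eta al y \<bullet> v)) = ?e al * gb G y (xi al y) v" by simp
  then show ?thesis using xi_norm_square[OF IS y, of al] by (simp add: mult.assoc[symmetric])
qed

lemma eta_phi_zero:
  assumes IS: "indef_S_manifold U n Phi xi eta G" and y: "y \<in> U"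
  shows "eta al y \<bullet> (Phi y *v v) = 0"
proof -
  have "gb G y (xi al y) (Phi y *v v) = - gb G y (Phi y *v xi al y) v" using phi_skew[OF IS y] by simp
  also have "\<dots> = 0" using phi_xi_zero[OF IS y] by (simp add: gb_def)
  finally show ?thesis using eta_by_metric[OF IS y] by simp
qed

lemma transpose_linear: "linear (transpose :: real^'n^'m \<Rightarrow> real^'m^'n)"
  by (rule linearI) (simp_all add: transpose_def vec_eq_iff)

lemma derivative_symmetric_matrix:
  assumes "(G has_derivative Q) (at x)" "open U" "x \<in> U"
    and "\<And>y. y \<in> U \<Longrightarrow> transpose (G y) = (G y :: real^'m^'m)"
  shows "transpose (Q h) = Q h"
proof -
  have bl: "bounded_linear (transpose :: real^'m^'m \<Rightarrow> real^'m^'m)"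
    using transpose_linear linear_conv_bounded_linear by blast
  have "(G has_derivative (\<lambda>h. transpose (Q h))) (at x)"
    by (rule has_derivative_transform_within_open[OF bounded_linear.has_derivative[OF bl assms(1)] assms(2,3)])
       (simp add: assms(4))
  then have "(\<lambda>h. transpose (Q h)) = Q" using has_derivative_unique assms(1) by blast
  then show ?thesis by metis
qed

section \<open>Differentiated structure equations\<close>

locale S_manifold_point =
  fixes U :: "(real^'m) set" and n :: nat
    and Phi G :: "real^'m \<Rightarrow> real^'m^'m"
    and xi eta :: "'r::finite \<Rightarrow> real^'m \<Rightarrow> real^'m" and x :: "real^'m"
  assumes IS: "indef_S_manifold U n Phi xi eta G" and xU: "x \<in> U"
begin

abbreviation "Q \<equiv> frechet_derivative G (at x)"
abbreviation "P \<equiv> frechet_derivative Phi (at x)"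

lemma open_U: "open U"
  using S_manifold_smooth[OF IS] by simp

lemma G_has_derivative: "y \<in> U \<Longrightarrow> (G has_derivative frechet_derivative G (at y)) (at y)"
  by (rule smooth_has_derivative[OF S_manifold_smooth(3)[OF IS] open_U])

lemma Phi_has_derivative: "y \<in> U \<Longrightarrow> (Phi has_derivative frechet_derivative Phi (at y)) (at y)"
  by (rule smooth_has_derivative[OF S_manifold_smooth(2)[OF IS] open_U])

lemma xi_has_derivative: "y \<in> U \<Longrightarrow> (xi a has_derivative frechet_derivative (xi a) (at y)) (at y)"
  by (rule smooth_has_derivative[OF S_manifold_smooth(4)[OF IS] open_U])

lemma eta_has_derivative: "y \<in> U \<Longrightarrow> (eta a has_derivative frechet_derivative (eta a) (at y)) (at y)"
  by (rule smooth_has_derivative[OF S_manifold_smooth(5)[OF IS] open_U])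

lemma linear_Q: "linear Q"
  using has_derivative_linear[OF G_has_derivative[OF xU]] .

lemma Q_symmetric: "transpose (Q h) = Q h"
  by (rule derivative_symmetric_matrix[OF G_has_derivative[OF xU] open_U xU]) (rule S_manifold_pointwise(1)[OF IS])

lemma deriv_phi_skew:
  "a \<bullet> (Q u *v (Phi x *v b)) + gb G x a (P u *v b) + b \<bullet> (Q u *v (Phi x *v a)) + gb G x b (P u *v a) = 0"
proof -
  have d: "((\<lambda>y. a \<bullet> (G y *v (Phi y *v b)) + b \<bullet> (G y *v (Phi y *v a))) has_derivative
     (\<lambda>h. (a \<bullet> (G x *v (P h *v b)) + a \<bullet> (Q h *v (Phi x *v b)))
        + (b \<bullet> (G x *v (P h *v a)) + b \<bullet> (Q h *v (Phi x *v a))))) (at x)"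
    by (intro has_derivative_add has_derivative_metric_phi G_has_derivative Phi_has_derivative xU)
  have c: "a \<bullet> (G y *v (Phi y *v b)) + b \<bullet> (G y *v (Phi y *v a)) = 0" if "y \<in> U" for y
    using phi_skew[OF IS that, of a b] gb_sym[of G y "Phi y *v a" b, OF S_manifold_pointwise(1)[OF IS that]]
    unfolding gb_def by linarith
  show ?thesis
    using has_derivative_locally_constant[OF d open_U xU c, of u] unfolding gb_def by linarith
qed

lemma deriv_phi_xi: "P u *v xi b x = - (Phi x *v frechet_derivative (xi b) (at x) u)"
proof -
  have d: "((\<lambda>y. Phi y *v xi b y) has_derivative
      (\<lambda>h. Phi x *v frechet_derivative (xi b) (at x) h + P h *v xi b x)) (at x)"
    by (rule has_derivative_matrix_vector_mult[OF Phi_has_derivative[OF xU] xi_has_derivative[OF xU]])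
  have "Phi x *v frechet_derivative (xi b) (at x) u + P u *v xi b x = 0"
    by (rule has_derivative_locally_constant[OF d open_U xU]) (rule phi_xi_zero[OF IS])
  then show ?thesis by (simp add: eq_neg_iff_add_eq_0 add.commute)
qed

text \<open>d eta = Phi at x, evaluated on constant vectors.\<close>
lemma deriv_eta_alternation:
  "frechet_derivative (eta al) (at x) u \<bullet> w - frechet_derivative (eta al) (at x) w \<bullet> u
   = 2 * gb G x u (Phi x *v w)"
proof -
  have "d_form (eta al) (\<lambda>_. u) (\<lambda>_. w) x =
      (1/2) * (frechet_derivative (eta al) (at x) u \<bullet> w - frechet_derivative (eta al) (at x) w \<bullet> u)"
    unfolding d_form_def lie_def by (simp add: frechet_derivative_inner_const[OF eta_has_derivative[OF xU]])
  then show ?thesis using S_manifold_d_eta_const[OF IS xU] by simp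
qed

text \<open>Normality at x, evaluated on constant vectors: the Nijenhuis tensor only sees D phi.\<close>
lemma deriv_normality:
  "P (Phi x *v a) *v b - P (Phi x *v b) *v a + Phi x *v (P b *v a) - Phi x *v (P a *v b)
    + (\<Sum>al\<in>UNIV. (2 * gb G x a (Phi x *v b)) *\<^sub>R xi al x) = 0"
proof -
  have "nijenhuis Phi (\<lambda>_. a) (\<lambda>_. b) x
      = P (Phi x *v a) *v b - P (Phi x *v b) *v a + Phi x *v (P b *v a) - Phi x *v (P a *v b)"
    unfolding nijenhuis_def lie_def phiF_def
    by (simp add: frechet_derivative_matrix_vector_const[OF Phi_has_derivative[OF xU]]
        matrix_vector_mult_diff_distrib linear_neg[OF matrix_vector_mul_linear])
  then show ?thesis
    using S_manifold_normal_const[OF IS xU, of a b] S_manifold_d_eta_const[OF IS xU] by simp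
qed

text \<open>The signs g(xi_al, xi_al) = \<plusminus>1 are locally constant.\<close>
lemma deriv_xi_norm: "((\<lambda>y. xi al y \<bullet> (G y *v xi al y)) has_derivative (\<lambda>h. 0)) (at x)"
proof -
  let ?X = "frechet_derivative (xi al) (at x)"
  have d: "((\<lambda>y. xi al y \<bullet> (G y *v xi al y)) has_derivative
      (\<lambda>h. xi al x \<bullet> (G x *v ?X h + Q h *v xi al x) + ?X h \<bullet> (G x *v xi al x))) (at x)"
    by (rule has_derivative_inner[OF xi_has_derivative[OF xU]
          has_derivative_matrix_vector_mult[OF G_has_derivative[OF xU] xi_has_derivative[OF xU]]])
  have "xi al x \<bullet> (G x *v ?X h + Q h *v xi al x) + ?X h \<bullet> (G x *v xi al x) = 0" for h
    by (rule has_derivative_square_one[OF d open_U xU])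
       (use xi_norm_square[OF IS] in \<open>simp add: gb_def\<close>)
  then show ?thesis using d by simp
qed

lemma deriv_phi_compatible:
  "gb G x (P u *v a) (Phi x *v b) + (Phi x *v a) \<bullet> (Q u *v (Phi x *v b)) + gb G x (Phi x *v a) (P u *v b)
   = a \<bullet> (Q u *v b) - (\<Sum>al\<in>UNIV. gb G x (xi al x) (xi al x) *
        ((frechet_derivative (eta al) (at x) u \<bullet> a) * (eta al x \<bullet> b)
         + (eta al x \<bullet> a) * (frechet_derivative (eta al) (at x) u \<bullet> b)))"
proof -
  let ?He = "\<lambda>al. frechet_derivative (eta al) (at x)"
  let ?e = "\<lambda>al y. xi al y \<bullet> (G y *v xi al y)"
  have d1: "((\<lambda>y. (Phi y *v a) \<bullet> (G y *v (Phi y *v b))) has_derivative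
     (\<lambda>h. (Phi x *v a) \<bullet> (G x *v (P h *v b) + Q h *v (Phi x *v b)) + (P h *v a) \<bullet> (G x *v (Phi x *v b)))) (at x)"
    by (rule has_derivative_inner[OF has_derivative_matrix_vector_const[OF Phi_has_derivative[OF xU]]
          has_derivative_matrix_vector_mult[OF G_has_derivative[OF xU]
            has_derivative_matrix_vector_const[OF Phi_has_derivative[OF xU]]]])
  have d2: "((\<lambda>y. a \<bullet> (G y *v b)) has_derivative (\<lambda>h. a \<bullet> (Q h *v b))) (at x)"
    using has_derivative_inner[OF has_derivative_const[of a]
        has_derivative_matrix_vector_const[OF G_has_derivative[OF xU], of b]] by simp
  have d3: "((\<lambda>y. ?e al y * ((eta al y \<bullet> a) * (eta al y \<bullet> b))) has_derivative
     (\<lambda>h. ?e al x * ((eta al x \<bullet> a) * (?He al h \<bullet> b) + (?He al h \<bullet> a) * (eta al x \<bullet> b)))) (at x)" for al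
    using has_derivative_mult[OF deriv_xi_norm has_derivative_mult[OF
          has_derivative_inner[OF eta_has_derivative[OF xU] has_derivative_const[of a]]
          has_derivative_inner[OF eta_has_derivative[OF xU] has_derivative_const[of b]]]]
    by simp
  have d: "((\<lambda>y. (Phi y *v a) \<bullet> (G y *v (Phi y *v b)) - a \<bullet> (G y *v b)
        + (\<Sum>al\<in>UNIV. ?e al y * ((eta al y \<bullet> a) * (eta al y \<bullet> b)))) has_derivative
     (\<lambda>h. ((Phi x *v a) \<bullet> (G x *v (P h *v b) + Q h *v (Phi x *v b)) + (P h *v a) \<bullet> (G x *v (Phi x *v b)))
        - a \<bullet> (Q h *v b)
        + (\<Sum>al\<in>UNIV. ?e al x * ((eta al x \<bullet> a) * (?He al h \<bullet> b) + (?He al h \<bullet> a) * (eta al x \<bullet> b))))) (at x)"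
    by (rule has_derivative_add[OF has_derivative_diff[OF d1 d2] has_derivative_sum]) (rule d3)
  have c: "(Phi y *v a) \<bullet> (G y *v (Phi y *v b)) - a \<bullet> (G y *v b)
        + (\<Sum>al\<in>UNIV. ?e al y * ((eta al y \<bullet> a) * (eta al y \<bullet> b))) = 0" if "y \<in> U" for y
    using S_manifold_pointwise(7)[OF IS that, of a b] unfolding gb_def by (simp add: mult.assoc)
  show ?thesis
    using has_derivative_locally_constant[OF d open_U xU c, of u]
    unfolding gb_def by (simp add: inner_add_right algebra_simps)
qed

text \<open>Since Phi = d eta, g(v, phi w) is the antisymmetrised first derivative of eta; differentiating
  once more expresses D_u g(v, phi w) through the second derivative of eta.\<close>
lemma deriv_fundamental_form:
  "v \<bullet> (G x *v (P u *v w)) + v \<bullet> (Q u *v (Phi x *v w))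
   = (second_deriv (eta a) x u v \<bullet> w - second_deriv (eta a) x u w \<bullet> v) / 2"
proof -
  let ?D = "\<lambda>y. frechet_derivative (eta a) (at y)"
  have form: "v \<bullet> (G y *v (Phi y *v w)) = (1/2) * (?D y v \<bullet> w - ?D y w \<bullet> v)" if "y \<in> U" for y
  proof -
    have "d_form (eta a) (\<lambda>_. v) (\<lambda>_. w) y = (1/2) * (?D y v \<bullet> w - ?D y w \<bullet> v)"
      unfolding d_form_def lie_def by (simp add: frechet_derivative_inner_const[OF eta_has_derivative[OF that]])
    then show ?thesis using S_manifold_d_eta_const[OF IS that, of a v w] unfolding gb_def by simp
  qed
  have dD: "((\<lambda>y. ?D y c \<bullet> d) has_derivative (\<lambda>u. second_deriv (eta a) x u c \<bullet> d)) (at x)" for c d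
    using has_derivative_inner[OF has_derivative_directional_derivative[OF S_manifold_smooth(5)[OF IS]
          open_U xU] has_derivative_const[of d]] by simp
  have "((\<lambda>y. v \<bullet> (G y *v (Phi y *v w))) has_derivative
      (\<lambda>u. (1/2) * (second_deriv (eta a) x u v \<bullet> w - second_deriv (eta a) x u w \<bullet> v))) (at x)"
    by (rule has_derivative_transform_within_open[OF _ open_U xU form[symmetric]])
       (intro has_derivative_mult_right has_derivative_diff dD)
  with has_derivative_metric_phi[OF G_has_derivative[OF xU] Phi_has_derivative[OF xU], of v w]
  have "(\<lambda>u. v \<bullet> (G x *v (P u *v w)) + v \<bullet> (Q u *v (Phi x *v w)))
      = (\<lambda>u. (1/2) * (second_deriv (eta a) x u v \<bullet> w - second_deriv (eta a) x u w \<bullet> v))"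
    by (rule has_derivative_unique)
  then show ?thesis by (metis (no_types, lifting) divide_inverse_commute inverse_eq_divide mult.commute)
qed

text \<open>Closedness of the fundamental form at x: by symmetry of second derivatives of eta, the cyclic
  sum of D_u g(v, phi w) vanishes.\<close>
lemma deriv_fundamental_form_cyclic:
  "v \<bullet> (Q u *v (Phi x *v w)) + gb G x v (P u *v w) + w \<bullet> (Q v *v (Phi x *v u)) + gb G x w (P v *v u)
   + u \<bullet> (Q w *v (Phi x *v v)) + gb G x u (P w *v v) = 0"
proof -
  fix a :: 'r
  have sym: "second_deriv (eta a) x u v = second_deriv (eta a) x v u" for u v
    by (rule second_deriv_symmetric[OF S_manifold_smooth(5)[OF IS] open_U xU])
  show ?thesis
    using deriv_fundamental_form[of v u w a] deriv_fundamental_form[of w v u a]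
      deriv_fundamental_form[of u w v a] sym[of u v] sym[of v w] sym[of w u]
    unfolding gb_def by (simp add: inner_commute algebra_simps)
qed

lemma S_manifold_phi_derivative_data:
  "phi_derivative_data (gb G x) (\<lambda>v. Phi x *v v) (\<lambda>al v. eta al x \<bullet> v) (\<lambda>al. xi al x)
     (\<lambda>al. gb G x (xi al x) (xi al x)) (\<lambda>u a b. a \<bullet> (Q u *v b)) (\<lambda>u a. P u *v a)
     (\<lambda>al u w. frechet_derivative (eta al) (at x) u \<bullet> w) (\<lambda>b u. frechet_derivative (xi b) (at x) u)"
proof (intro phi_derivative_data.intro metric_f_structure.intro phi_derivative_data_axioms.intro)
  show "linear (\<lambda>u. a \<bullet> (Q u *v b))" for a b
    by (rule linearI) (simp_all add: linear_add[OF linear_Q] linear_scale[OF linear_Q]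
        matrix_vector_mult_add_rdistrib scaleR_matrix_vector_assoc[symmetric] inner_add_right)
  show "linear (\<lambda>a. a \<bullet> (Q u *v b))" for u b by (rule linearI) (simp_all add: inner_add_left)
  show "linear (\<lambda>b. a \<bullet> (Q u *v b))" for u a
    by (rule linearI) (simp_all add: matrix_vector_right_distrib matrix_vector_mult_scaleR inner_add_right)
  show "a \<bullet> (Q u *v b) = b \<bullet> (Q u *v a)" for u a b by (rule symmetric_matrix_inner[OF Q_symmetric])
  show "linear (gb G x u)" for u
    unfolding gb_def
    by (rule linearI) (simp_all add: matrix_vector_right_distrib matrix_vector_mult_scaleR inner_add_right)
  show "gb G x u v = gb G x v u" for u v by (rule gb_sym[of G x, OF S_manifold_pointwise(1)[OF IS xU]])
  show "linear (\<lambda>v. eta al x \<bullet> v)" "linear (\<lambda>w. frechet_derivative (eta al) (at x) u \<bullet> w)" for al u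
    by (rule linearI; simp add: inner_add_right)+
  show "linear (\<lambda>v. Phi x *v v)" "linear (\<lambda>a. P u *v a)" for u by simp_all
  show "Phi x *v (Phi x *v v) = - v + (\<Sum>al\<in>UNIV. (eta al x \<bullet> v) *\<^sub>R xi al x)" for v
    by (rule S_manifold_pointwise(4)[OF IS xU])
  show "eta al x \<bullet> xi b x = (if al = b then 1 else 0)" for al b by (rule S_manifold_pointwise(5)[OF IS xU])
  show "Phi x *v xi al x = 0" for al by (rule phi_xi_zero[OF IS xU])
  show "eta al x \<bullet> (Phi x *v v) = 0" for al v by (rule eta_phi_zero[OF IS xU])
  show "gb G x (Phi x *v a) b = - gb G x a (Phi x *v b)" for a b by (rule phi_skew[OF IS xU])
  show "gb G x (xi al x) (xi al x) * gb G x (xi al x) (xi al x) = 1" for al by (rule xi_norm_square[OF IS xU])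
  show "a \<bullet> (Q u *v (Phi x *v b)) + gb G x a (P u *v b) + b \<bullet> (Q u *v (Phi x *v a)) + gb G x b (P u *v a) = 0"
    for u a b by (rule deriv_phi_skew)
  show "gb G x (P u *v a) (Phi x *v b) + (Phi x *v a) \<bullet> (Q u *v (Phi x *v b)) + gb G x (Phi x *v a) (P u *v b)
      = a \<bullet> (Q u *v b) - (\<Sum>al\<in>UNIV. gb G x (xi al x) (xi al x) *
        ((frechet_derivative (eta al) (at x) u \<bullet> a) * (eta al x \<bullet> b)
         + (eta al x \<bullet> a) * (frechet_derivative (eta al) (at x) u \<bullet> b)))" for u a b
    by (rule deriv_phi_compatible)
  show "v \<bullet> (Q u *v (Phi x *v w)) + gb G x v (P u *v w) + w \<bullet> (Q v *v (Phi x *v u)) + gb G x w (P v *v u)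
      + u \<bullet> (Q w *v (Phi x *v v)) + gb G x u (P w *v v) = 0" for u v w
    by (rule deriv_fundamental_form_cyclic)
  show "P u *v xi b x = - (Phi x *v frechet_derivative (xi b) (at x) u)" for u b by (rule deriv_phi_xi)
  show "frechet_derivative (eta al) (at x) u \<bullet> w - frechet_derivative (eta al) (at x) w \<bullet> u
      = 2 * gb G x u (Phi x *v w)" for al u w by (rule deriv_eta_alternation)
  show "P (Phi x *v a) *v b - P (Phi x *v b) *v a + Phi x *v (P b *v a) - Phi x *v (P a *v b)
      + (\<Sum>al\<in>UNIV. (2 * gb G x a (Phi x *v b)) *\<^sub>R xi al x) = 0" for a b by (rule deriv_normality)
qed

lemma nabla_phi_eq_nabla_form:
  "gb G x (nabla_phi G Phi x u a) z =
   nabla_form (\<lambda>u a b. a \<bullet> (Q u *v b)) (gb G x) (\<lambda>u a. P u *v a) (\<lambda>v. Phi x *v v) u a z"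
proof -
  have christ: "gb G x (christoffel G x u w) z' = koszul (\<lambda>u a b. a \<bullet> (Q u *v b)) u w z'" for w z'
    by (rule christoffel_koszul[OF S_manifold_pointwise(1,2)[OF IS xU] linear_Q])
  show ?thesis
    unfolding nabla_phi_def nabla_form_def
    using christ[of "Phi x *v a" z] christ[of a "Phi x *v z"] phi_skew[OF IS xU, of "christoffel G x u a" z]
    by (simp add: gb_def inner_add_left inner_diff_left)
qed

lemma nabla_phi_orthogonal_vanishes:
  assumes "gb G x X Z = 0" "gb G x Y Z = 0" "\<And>al. gb G x (xi al x) Z = 0"
  shows "gb G x (nabla_phi G Phi x X Y) Z = 0"
proof -
  interpret phi_derivative_data "gb G x" "\<lambda>v. Phi x *v v" "\<lambda>al v. eta al x \<bullet> v" "\<lambda>al. xi al x"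
    "\<lambda>al. gb G x (xi al x) (xi al x)" "\<lambda>u a b. a \<bullet> (Q u *v b)" "\<lambda>u a. P u *v a"
    "\<lambda>al u w. frechet_derivative (eta al) (at x) u \<bullet> w" "\<lambda>b u. frechet_derivative (xi b) (at x) u"
    by (rule S_manifold_phi_derivative_data)
  have "eta al x \<bullet> Z = 0" for al using eta_by_metric[OF IS xU, of al Z] assms(3) by simp
  then show ?thesis unfolding nabla_phi_eq_nabla_form using B_vanishes assms by blast
qed

end

section \<open>Characteristic lightlike hypersurfaces\<close>

text \<open>E spans the radical and N is the transversal section, so both are orthogonal to the screen.\<close>
lemma screen_orthogonal_E_N:
  assumes IS: "indef_S_manifold U n Phi xi eta G"
    and CH: "char_lightlike_hypersurface U Phi xi G F S E N"
    and xU: "x \<in> U" and Fx: "F x = 0" and X: "X \<in> S x"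
  shows "gb G x X (E x) = 0" "gb G x X (N x) = 0"
proof -
  let ?T = "{v. frechet_derivative F (at x) v = 0}"
  have ch: "S x \<subseteq> ?T" "E x \<in> rad_space G x ?T" "\<forall>s\<in>S x. gb G x (N x) s = 0"
    using CH xU Fx unfolding char_lightlike_hypersurface_def Let_def by auto
  have sym: "gb G x u v = gb G x v u" for u v by (rule gb_sym[of G x, OF S_manifold_pointwise(1)[OF IS xU]])
  show "gb G x X (E x) = 0" using ch(1,2) X sym unfolding rad_space_def by auto
  show "gb G x X (N x) = 0" using ch(3) X sym by auto
qed

text \<open>On a characteristic hypersurface the structure vectors, spanning ker phi, lie in the screen.\<close>
lemma xi_in_screen:
  assumes IS: "indef_S_manifold U n Phi xi eta G"
    and CH: "char_lightlike_hypersurface U Phi xi G F S E N"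
    and xU: "x \<in> U" and Fx: "F x = 0"
  shows "xi al x \<in> S x"
  using CH xU Fx phi_xi_zero[OF IS xU] unfolding char_lightlike_hypersurface_def Let_def by auto

theorem lemma4p1:
  fixes U :: "(real^'m) set" and n :: nat
    and Phi G :: "real^'m \<Rightarrow> real^'m^'m"
    and xi eta :: "'r::finite \<Rightarrow> real^'m \<Rightarrow> real^'m"
    and F :: "real^'m \<Rightarrow> real" and S :: "real^'m \<Rightarrow> (real^'m) set"
    and E N :: "real^'m \<Rightarrow> real^'m"
  assumes "indef_S_manifold U n Phi xi eta G"
    and "char_lightlike_hypersurface U Phi xi G F S E N"
    and "x \<in> U" and "F x = 0"
    and "X \<in> D0 G Phi S E N x" and "Y \<in> D0 G Phi S E N x"
  shows "gb G x (nabla_phi G Phi x X Y) (E x) = 0 \<and> gb G x (nabla_phi G Phi x X Y) (N x) = 0"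
proof -
  interpret S_manifold_point U n Phi G xi eta x by (rule S_manifold_point.intro[OF assms(1,3)])
  have XY: "X \<in> S x" "Y \<in> S x" using assms(5,6) unfolding D0_def by auto
  note screen = screen_orthogonal_E_N[OF assms(1-4)]
  have xi: "xi al x \<in> S x" for al by (rule xi_in_screen[OF assms(1-4)])
  show ?thesis
    using nabla_phi_orthogonal_vanishes[of X "E x" Y]
      nabla_phi_orthogonal_vanishes[of X "N x" Y]
      screen[OF XY(1)] screen[OF XY(2)] screen[OF xi]
    by blast
qed

end
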